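(* Let $\mathbb{K}$ be a field of characteristic not $2$, $E$ an $n$-dimensional $\mathbb{K}$-vector space with $n\geq 2$, and $\mathcal{V}$ a linear subspace of $\mathcal{L}(E)$ such that every $u\in\mathcal{V}$ has at most two distinct eigenvalues in $\mathbb{K}$; if $n=2$, assume moreover that every $u\in\mathcal{V}$ has at most one nonzero eigenvalue in $\mathbb{K}$. Then for every $2$-complex $(E_1,\dots,E_n)$ of $E$, there exists a $\mathcal{V}$-good vector not belonging to $E_1\cup\cdots\cup E_n$.
   Context: A $2$-complex of $E$ is an $n$-tuple $(E_i)_{1\leq i\leq n}$ of linear subspaces of $E$ with $\dim E_i=\lfloor (i+1)/2\rfloor$ for all $i$. A nonzero vector $x\in E$ is $\mathcal{V}$-good if there is no $u\in\mathcal{V}$ with $\operatorname{im}u=\mathbb{K}x$ and $\operatorname{tr}(u)=0$. *)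

theory Defs
  imports "HOL-Analysis.Analysis"
begin

text \<open>E = K^n is modelled as 'a^'n (n = CARD('n)); L(E) as n x n matrices 'a^'n^'n acting by *v.\<close>

definition mat_scale :: "'a::field \<Rightarrow> 'a^'n^'n \<Rightarrow> 'a^'n^'n" where
  "mat_scale c M = (\<chi> i j. c * M $ i $ j)"

definition linear_subspace_mat :: "('a::field^'n^'n) set \<Rightarrow> bool" where
  "linear_subspace_mat V \<longleftrightarrow> 0 \<in> V \<and> (\<forall>A\<in>V. \<forall>B\<in>V. A + B \<in> V) \<and> (\<forall>c. \<forall>A\<in>V. mat_scale c A \<in> V)"

definition is_eigenvalue :: "'a::field^'n^'n \<Rightarrow> 'a \<Rightarrow> bool" where
  "is_eigenvalue u c \<longleftrightarrow> (\<exists>x. x \<noteq> 0 \<and> u *v x = c *s x)"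

definition two_complex :: "(nat \<Rightarrow> ('a::field^'n) set) \<Rightarrow> bool" where
  "two_complex Es \<longleftrightarrow> (\<forall>i\<in>{1..CARD('n)}. vec.subspace (Es i) \<and> vec.dim (Es i) = (i + 1) div 2)"

definition V_good :: "('a::field^'n^'n) set \<Rightarrow> 'a^'n \<Rightarrow> bool" where
  "V_good V x \<longleftrightarrow> x \<noteq> 0 \<and> \<not> (\<exists>u\<in>V. range ((*v) u) = vec.span {x} \<and> trace u = 0)"

end

theory Submission
  imports Defs
begin

text \<open>
  Suppose every vector outside \<open>E\<^sub>1 \<union> \<dots> \<union> E\<^sub>n\<close> is bad. A bad vector \<open>x\<close> is the image of a
  trace-zero rank-one map \<open>x \<phi>\<^sub>x\<^sup>T\<close> in \<open>V\<close>, so \<open>\<phi>\<^sub>x(x) = 0\<close>. If \<open>x, y\<close> are bad, non-collinear and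
  \<open>s = \<phi>\<^sub>x(y) \<phi>\<^sub>y(x) \<noteq> 0\<close>, then \<open>s x \<phi>\<^sub>x\<^sup>T + y \<phi>\<^sub>y\<^sup>T \<in> V\<close> has the eigenvalues \<open>s\<close> and \<open>-s\<close>,
  and also \<open>0\<close> when \<open>n \<ge> 3\<close>, which the hypotheses forbid. Hence the hyperplanes
  \<open>H\<^sub>x = ker \<phi>\<^sub>x\<close> form a tournament on the bad vectors: \<open>y \<in> H\<^sub>x\<close> or \<open>x \<in> H\<^sub>y\<close>.

  Over an infinite field, one picks bad vectors \<open>x\<^sub>1, \<dots>, x\<^sub>n\<close>, each outside the hyperplanes of
  the previous ones; they are independent and all lie in \<open>H\<^bsub>x\<^sub>n\<^esub>\<close>, which is absurd.
  Over a finite field with \<open>q \<ge> 3\<close> elements, double counting the arcs gives a bad \<open>x\<close>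
  with \<open>|S| + q - 1 \<le> 2 |S \<inter> H\<^sub>x|\<close> for the set \<open>S\<close> of bad vectors, while the dimensions
  of the \<open>E\<^sub>i\<close> force \<open>|S|\<close> to be larger than \<open>2 q\<^sup>n\<^sup>-\<^sup>1 - q - 1\<close> (with a refinement for \<open>n = 3\<close>).
\<close>

section \<open>Linear forms and rank-one maps\<close>

definition dotp :: "'a::field^'n \<Rightarrow> 'a^'n \<Rightarrow> 'a" where
  "dotp f z = (\<Sum>j\<in>UNIV. f $ j * z $ j)"

definition outer :: "'a::field^'n \<Rightarrow> 'a^'n \<Rightarrow> 'a^'n^'n" where
  "outer x f = (\<chi> i j. x $ i * f $ j)"

lemma dotp_zero [simp]: "dotp f 0 = 0"
  by (simp add: dotp_def)

lemma dotp_add: "dotp f (y + z) = dotp f y + dotp f z"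
  by (simp add: dotp_def sum.distrib algebra_simps)

lemma dotp_diff: "dotp f (y - z) = dotp f y - dotp f z"
  by (simp add: dotp_def sum_subtractf algebra_simps)

lemma dotp_scale: "dotp f (c *s z) = c * dotp f z"
  by (simp add: dotp_def sum_distrib_left mult_ac)

lemma dotp_axis: "dotp f (axis j 1) = f $ j"
  by (simp add: dotp_def axis_def if_distrib sum.If_cases cong del: if_weak_cong)

lemma outer_mult_vec: "outer x f *v z = dotp f z *s x"
  by (simp add: outer_def dotp_def matrix_vector_mult_def vec_eq_iff sum_distrib_left mult_ac)

lemma trace_outer: "trace (outer x f) = dotp f x"
  by (simp add: outer_def dotp_def trace_def mult_ac)

lemma mat_scale_mult_vec: "mat_scale c A *v z = c *s (A *v z)"
  by (simp add: mat_scale_def matrix_vector_mult_def vec_eq_iff sum_distrib_left mult_ac)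

lemma subspace_kernel: "vec.subspace {z. dotp f z = 0}"
  by (rule vec.subspaceI) (auto simp: dotp_add dotp_scale)

lemma kernel_neq_UNIV: "f \<noteq> 0 \<Longrightarrow> {z. dotp f z = 0} \<noteq> UNIV"
  by (metis (mono_tags) UNIV_I dotp_axis mem_Collect_eq vec_eq_iff zero_index)

lemma span_eq_UNIV_iff_dim: "vec.span (X :: ('a::field^'n) set) = UNIV \<longleftrightarrow> vec.dim X = CARD('n)"
  by (simp add: vec.dim_eq_full[symmetric] vec.dimension_def card_cart_basis)

lemma finite_UNIV_vec:
  assumes "finite (UNIV :: 'a set)"
  shows "finite (UNIV :: ('a^'n) set)"
  using assms card.infinite finite_UNIV_card_ge_0 by fastforce

lemma noncollinear_comb_nonzero:
  fixes x y :: "'a::field^'n"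
  assumes "\<forall>c. y \<noteq> c *s x" "b \<noteq> 0"
  shows "a *s x + b *s y \<noteq> 0"
proof
  assume "a *s x + b *s y = 0"
  then have "b *s y = (- a) *s x"
    by (simp add: eq_neg_iff_add_eq_0 add.commute)
  then have "inverse b *s (b *s y) = inverse b *s ((- a) *s x)"
    by simp
  then have "y = (- a / b) *s x"
    using assms(2) by (simp add: vector_smult_assoc divide_inverse mult.commute)
  then show False
    using assms(1) by blast
qed

lemma scale_notin_subspace:
  fixes x :: "'a::field^'n"
  assumes "vec.subspace U" "x \<notin> U" "c \<noteq> 0"
  shows "c *s x \<notin> U"
proof
  assume "c *s x \<in> U"
  then have "inverse c *s (c *s x) \<in> U"
    using assms(1) vec.subspace_scale by blast
  with assms(2,3) show False
    by (simp add: vector_smult_assoc)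
qed

lemma two_complex_neq_UNIV:
  fixes Es :: "nat \<Rightarrow> ('a::field^'n) set"
  assumes "two_complex Es" "CARD('n) \<ge> 2" "i \<in> {1..CARD('n)}"
  shows "Es i \<noteq> UNIV"
proof
  assume "Es i = UNIV"
  moreover have "vec.dim (Es i) = (i + 1) div 2"
    using assms(1,3) unfolding two_complex_def by blast
  ultimately have "(i + 1) div 2 = CARD('n)"
    by (simp add: vec_dim_card card_cart_basis)
  with assms(2,3) show False
    by auto
qed

lemma outer_of_range_eq_span:
  fixes u :: "'a::field^'n^'n"
  assumes "range ((*v) u) = vec.span {x}"
  shows "\<exists>f. u = outer x f"
proof -
  have "\<exists>c. u *v axis j 1 = c *s x" for j
    using assms by (auto simp: vec.span_singleton)
  then obtain c where c: "\<And>j. u *v axis j 1 = c j *s x"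
    by metis
  have "u $ i $ j = outer x (\<chi> j. c j) $ i $ j" for i j
    using arg_cong[OF c[of j], of "\<lambda>v. v $ i"]
    by (simp add: matrix_vector_mult_def axis_def outer_def if_distrib sum.If_cases mult_ac
        cong del: if_weak_cong)
  then show ?thesis
    by (auto simp: vec_eq_iff)
qed

lemma not_V_good_imp_outer:
  fixes V :: "('a::field^'n^'n) set"
  assumes "x \<noteq> 0" "\<not> V_good V x"
  shows "\<exists>f. f \<noteq> 0 \<and> dotp f x = 0 \<and> outer x f \<in> V"
proof -
  obtain u where u: "u \<in> V" "range ((*v) u) = vec.span {x}" "trace u = 0"
    using assms unfolding V_good_def by blast
  obtain f where f: "u = outer x f"
    using outer_of_range_eq_span[OF u(2)] by blast
  have "f \<noteq> 0"
  proof
    assume "f = 0"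
    then have "range ((*v) u) = {0}"
      by (auto simp: f outer_mult_vec dotp_def)
    then show False
      using u(2) vec.span_base[of x "{x}"] assms(1) by auto
  qed
  then show ?thesis
    using u f trace_outer by metis
qed

section \<open>Two rank-one maps with crossed kernels\<close>

lemma is_eigenvalueI: "x \<noteq> 0 \<Longrightarrow> u *v x = c *s x \<Longrightarrow> is_eigenvalue u c"
  unfolding is_eigenvalue_def by blast

lemma exists_common_kernel_vector:
  fixes f g :: "'a::field^'n"
  assumes "CARD('n) \<ge> 3"
  shows "\<exists>z. z \<noteq> 0 \<and> dotp f z = 0 \<and> dotp g z = 0"
proof (rule ccontr)
  assume no_common: "\<not> ?thesis"
  define M :: "'a^'n^2" where "M = (\<chi> i. if i = 0 then f else g)"
  have Mz: "(M *v z) $ i = (if i = 0 then dotp f z else dotp g z)" for z i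
    by (simp add: M_def matrix_vector_mult_def dotp_def)
  have "inj ((*v) M)"
  proof (rule injI)
    fix a b assume "M *v a = M *v b"
    then have "M *v (a - b) = 0"
      by (simp add: matrix_vector_mult_diff_distrib)
    then have "dotp f (a - b) = 0 \<and> dotp g (a - b) = 0"
      using Mz[of "a - b" 0] Mz[of "a - b" 1] by (simp add: vec_eq_iff)
    with no_common show "a = b"
      by auto
  qed
  then have "vec.dim (range ((*v) M)) = vec.dim (UNIV :: ('a^'n) set)"
    by (intro vec.dim_image_eq) auto
  moreover have "vec.dim (range ((*v) M)) \<le> CARD(2)"
    by (rule dim_subset_UNIV_cart_gen)
  ultimately show False
    using assms by (simp add: vec_dim_card card_cart_basis)
qed

lemma eigenvalue_outer_sum:
  fixes x y f g :: "'a::field^'n"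
  assumes fx: "dotp f x = 0" and gy: "dotp g y = 0" and xy: "\<forall>c. y \<noteq> c *s x"
    and gx: "dotp g x \<noteq> 0" and e: "e * e = 1"
  defines "s \<equiv> dotp f y * dotp g x"
  shows "is_eigenvalue (mat_scale s (outer x f) + outer y g) (e * s)"
proof (rule is_eigenvalueI)
  define v where "v = s *s x + (e * dotp g x) *s y"
  show "v \<noteq> 0"
    unfolding v_def using e gx by (intro noncollinear_comb_nonzero[OF xy]) auto
  have "dotp f v = e * s" and "dotp g v = s * dotp g x"
    using fx gy by (simp_all add: v_def s_def dotp_add dotp_scale mult_ac)
  then have "(mat_scale s (outer x f) + outer y g) *v v = (s * (e * s)) *s x + (s * dotp g x) *s y"
    by (simp add: matrix_vector_mult_add_rdistrib mat_scale_mult_vec outer_mult_vec)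
  also have "\<dots> = (e * s) *s v"
  proof -
    have "e * s * (e * dotp g x) = s * dotp g x"
      by (metis e mult.assoc mult.commute mult_1)
    then show ?thesis
      by (simp add: v_def vec.scale_right_distrib mult_ac)
  qed
  finally show "(mat_scale s (outer x f) + outer y g) *v v = (e * s) *s v" .
qed

lemma outer_pair_kernel:
  fixes V :: "('a::field^'n^'n) set"
  assumes char: "(2::'a) \<noteq> 0"
    and n2: "CARD('n) \<ge> 2"
    and V: "linear_subspace_mat V"
    and two_eig: "\<forall>u\<in>V. finite {c. is_eigenvalue u c} \<and> card {c. is_eigenvalue u c} \<le> 2"
    and n_eq_2: "CARD('n) = 2 \<Longrightarrow>
       (\<forall>u\<in>V. finite {c. c \<noteq> 0 \<and> is_eigenvalue u c} \<and> card {c. c \<noteq> 0 \<and> is_eigenvalue u c} \<le> 1)"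
    and x: "outer x f \<in> V" "dotp f x = 0"
    and y: "outer y g \<in> V" "dotp g y = 0"
    and xy: "\<forall>c. y \<noteq> c *s x"
  shows "dotp f y = 0 \<or> dotp g x = 0"
proof (rule ccontr)
  assume "\<not> ?thesis"
  then have gx: "dotp g x \<noteq> 0" and s0: "dotp f y * dotp g x \<noteq> 0"
    by auto
  define s where "s = dotp f y * dotp g x"
  define w where "w = mat_scale s (outer x f) + outer y g"
  have "w \<in> V"
    using V x y unfolding w_def linear_subspace_mat_def by blast
  have eig_s: "is_eigenvalue w s" and eig_neg_s: "is_eigenvalue w (- s)"
    using eigenvalue_outer_sum[OF x(2) y(2) xy gx, of 1] eigenvalue_outer_sum[OF x(2) y(2) xy gx, of "- 1"]
    by (simp_all add: w_def s_def)
  have "s \<noteq> - s"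
    using char s0 by (simp add: s_def eq_neg_iff_add_eq_0 flip: mult_2)
  show False
  proof (cases "CARD('n) = 2")
    case True
    with n_eq_2 \<open>w \<in> V\<close> have "finite {c. c \<noteq> 0 \<and> is_eigenvalue w c}"
      and "card {c. c \<noteq> 0 \<and> is_eigenvalue w c} \<le> 1"
      by auto
    moreover have "{s, - s} \<subseteq> {c. c \<noteq> 0 \<and> is_eigenvalue w c}"
      using eig_s eig_neg_s s0 by (auto simp: s_def)
    ultimately have "card {s, - s} \<le> 1"
      by (meson card_mono order_trans)
    with \<open>s \<noteq> - s\<close> show False
      by simp
  next
    case False
    then have "CARD('n) \<ge> 3"
      using n2 by linarith
    then obtain z where z: "z \<noteq> 0" "dotp f z = 0" "dotp g z = 0"
      using exists_common_kernel_vector by blast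
    then have "is_eigenvalue w 0"
      by (intro is_eigenvalueI[of z]) (simp_all add: w_def matrix_vector_mult_add_rdistrib
          mat_scale_mult_vec outer_mult_vec)
    with eig_s eig_neg_s have "{0, s, - s} \<subseteq> {c. is_eigenvalue w c}"
      by blast
    with two_eig \<open>w \<in> V\<close> have "card {0, s, - s} \<le> 2"
      by (meson card_mono order_trans)
    with \<open>s \<noteq> - s\<close> s0 show False
      by (simp add: s_def)
  qed
qed

lemma bad_vectors_kernel_tournament:
  fixes V :: "('a::field^'n^'n) set"
  assumes char: "(2::'a) \<noteq> 0"
    and n2: "CARD('n) \<ge> 2"
    and V: "linear_subspace_mat V"
    and two_eig: "\<forall>u\<in>V. finite {c. is_eigenvalue u c} \<and> card {c. is_eigenvalue u c} \<le> 2"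
    and n_eq_2: "CARD('n) = 2 \<Longrightarrow>
       (\<forall>u\<in>V. finite {c. c \<noteq> 0 \<and> is_eigenvalue u c} \<and> card {c. c \<noteq> 0 \<and> is_eigenvalue u c} \<le> 1)"
    and bad: "\<forall>x\<in>S. x \<noteq> 0 \<and> \<not> V_good V x"
  obtains \<phi> where "\<forall>x\<in>S. \<phi> x \<noteq> 0 \<and> dotp (\<phi> x) x = 0"
    and "\<forall>x\<in>S. \<forall>y\<in>S. (\<forall>c. y \<noteq> c *s x) \<longrightarrow> dotp (\<phi> x) y = 0 \<or> dotp (\<phi> y) x = 0"
proof -
  have "\<exists>f. f \<noteq> 0 \<and> dotp f x = 0 \<and> outer x f \<in> V" if "x \<in> S" for x
    using bad not_V_good_imp_outer that by blast
  then obtain \<phi> where \<phi>: "\<And>x. x \<in> S \<Longrightarrow> \<phi> x \<noteq> 0 \<and> dotp (\<phi> x) x = 0 \<and> outer x (\<phi> x) \<in> V"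
    by metis
  have "dotp (\<phi> x) y = 0 \<or> dotp (\<phi> y) x = 0" if "x \<in> S" "y \<in> S" "\<forall>c. y \<noteq> c *s x" for x y
    using \<phi>[OF that(1)] \<phi>[OF that(2)] that(3)
    by (intro outer_pair_kernel[OF char n2 V two_eig n_eq_2]) auto
  with \<phi> show ?thesis
    using that by blast
qed

section \<open>Infinite fields\<close>

lemma line_meets_subspace_once:
  fixes x y :: "'a::field^'n"
  assumes W: "vec.subspace W" and "x \<notin> W" and "y + s *s x \<in> W" "y + t *s x \<in> W"
  shows "s = t"
proof (rule ccontr)
  assume "s \<noteq> t"
  have "(y + s *s x) - (y + t *s x) \<in> W"
    using assms vec.subspace_diff by blast
  then have "(s - t) *s x \<in> W"
    by (simp add: vec.scale_left_diff_distrib)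
  then have "inverse (s - t) *s ((s - t) *s x) \<in> W"
    using W vec.subspace_scale by blast
  moreover have "inverse (s - t) * (s - t) = 1"
    using \<open>s \<noteq> t\<close> by simp
  ultimately show False
    using \<open>x \<notin> W\<close> by (simp only: vector_smult_assoc vector_smult_lid)
qed

lemma finite_line_meets_subspace:
  fixes x y :: "'a::field^'n"
  assumes "vec.subspace W" and "x \<notin> W"
  shows "finite {t. y + t *s x \<in> W}"
proof (cases "{t. y + t *s x \<in> W} = {}")
  case False
  then obtain s where "y + s *s x \<in> W"
    by blast
  then have "{t. y + t *s x \<in> W} \<subseteq> {s}"
    using line_meets_subspace_once[OF assms] by blast
  then show ?thesis
    using finite_subset by blast
qed simp

lemma ex_not_in_Union_subspaces:
  assumes inf: "infinite (UNIV :: 'a::field set)"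
    and "finite F" and "\<forall>U\<in>F. vec.subspace U \<and> U \<noteq> (UNIV :: ('a^'n) set)"
  shows "\<exists>x. \<forall>U\<in>F. x \<notin> U"
  using assms(2,3)
proof (induction F rule: finite_induct)
  case (insert U F)
  then have U: "vec.subspace U" "U \<noteq> UNIV" and F: "\<forall>W\<in>F. vec.subspace W"
    by simp_all
  obtain x where x: "\<forall>W\<in>F. x \<notin> W"
    using insert by auto
  show ?case
  proof (cases "x \<in> U")
    case True
    obtain y where y: "y \<notin> U"
      using U(2) by blast
    have "finite (\<Union>W\<in>F. {t. y + t *s x \<in> W})"
      using insert.hyps(1) F x finite_line_meets_subspace by blast
    then obtain t where t: "t \<notin> (\<Union>W\<in>F. {t. y + t *s x \<in> W})"
      using ex_new_if_finite[OF inf] by blast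
    have "y + t *s x \<notin> U"
    proof
      assume "y + t *s x \<in> U"
      moreover have "t *s x \<in> U"
        using True U vec.subspace_scale by blast
      ultimately have "(y + t *s x) - t *s x \<in> U"
        using U vec.subspace_diff by blast
      with y show False
        by simp
    qed
    with t show ?thesis
      by blast
  qed (use x in blast)
qed simp

lemma independent_chain_in_hyperplane:
  fixes S :: "('a::field^'n) set"
  assumes avoid: "\<And>X. finite X \<Longrightarrow> X \<subseteq> S \<Longrightarrow> \<exists>w\<in>S. \<forall>x\<in>X. w \<notin> H x"
    and H: "\<forall>x\<in>S. vec.subspace (H x) \<and> x \<in> H x"
    and tournament: "\<forall>x\<in>S. \<forall>y\<in>S. (\<forall>c. y \<noteq> c *s x) \<longrightarrow> y \<in> H x \<or> x \<in> H y"
  shows "\<exists>X z. X \<subseteq> S \<and> vec.independent X \<and> card X = k \<and> z \<in> S \<and> X \<subseteq> H z"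
proof (induction k)
  case 0
  obtain z where "z \<in> S"
    using avoid[of "{}"] by auto
  then show ?case
    by (intro exI[of _ "{}"] exI[of _ z]) (auto simp: vec.independent_empty)
next
  case (Suc k)
  \<comment> \<open>A new vector outside \<open>H z\<close> is outside \<open>span X\<close>; outside every \<open>H x\<close>,
      \<open>x \<in> X\<close>, it sees all of \<open>X\<close> in its own hyperplane.\<close>
  then obtain X z where X: "X \<subseteq> S" "vec.independent X" "card X = k" and z: "z \<in> S" "X \<subseteq> H z"
    by blast
  have "finite X"
    using X(2) vec.finiteI_independent by blast
  then obtain w where w: "w \<in> S" "\<forall>x\<in>insert z X. w \<notin> H x"
    using avoid[of "insert z X"] X(1) z(1) by auto
  have "X \<subseteq> H w"
  proof
    fix x assume "x \<in> X"
    then have "x \<in> S" "w \<notin> H x"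
      using X(1) w(2) by auto
    moreover have "\<forall>c. w \<noteq> c *s x"
      using H \<open>x \<in> S\<close> \<open>w \<notin> H x\<close> vec.subspace_scale by blast
    ultimately show "x \<in> H w"
      using tournament w(1) by blast
  qed
  moreover have "w \<notin> vec.span X"
    using H z w(2) vec.span_minimal[of X "H z"] by blast
  then have "vec.independent (insert w X)" "w \<notin> X"
    using X(2) vec.independent_insertI vec.span_base by blast+
  ultimately show ?case
    using X w(1) H \<open>finite X\<close>
    by (intro exI[of _ "insert w X"] exI[of _ w]) auto
qed

lemma noncollinear_tournament_infinite:
  fixes S :: "('a::field^'n) set" and F :: "('a^'n) set set"
  assumes inf: "infinite (UNIV :: 'a set)"
    and F: "finite F" "\<forall>U\<in>F. vec.subspace U \<and> U \<noteq> UNIV"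
    and S: "S = - \<Union>F"
    and H: "\<forall>x\<in>S. vec.subspace (H x) \<and> H x \<noteq> UNIV \<and> x \<in> H x"
    and tournament: "\<forall>x\<in>S. \<forall>y\<in>S. (\<forall>c. y \<noteq> c *s x) \<longrightarrow> y \<in> H x \<or> x \<in> H y"
  shows False
proof -
  have avoid: "\<exists>w\<in>S. \<forall>x\<in>X. w \<notin> H x" if "finite X" "X \<subseteq> S" for X
  proof -
    have "\<exists>w. \<forall>U\<in>F \<union> H ` X. w \<notin> U"
      using that F H by (intro ex_not_in_Union_subspaces[OF inf]) auto
    then show ?thesis
      unfolding S by blast
  qed
  obtain X z where X: "X \<subseteq> S" "vec.independent X" "card X = CARD('n)" and z: "z \<in> S" "X \<subseteq> H z"
    using independent_chain_in_hyperplane[OF avoid] H tournament by blast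
  have "vec.span X = UNIV"
    using X(2,3) by (simp add: span_eq_UNIV_iff_dim vec.dim_eq_card_independent)
  moreover have "vec.span X \<subseteq> H z"
    using H z vec.span_minimal by blast
  ultimately show False
    using H z by blast
qed

lemma two_complex_tournament_infinite:
  fixes Es :: "nat \<Rightarrow> ('a::field^'n) set" and \<phi> :: "'a^'n \<Rightarrow> 'a^'n"
  assumes inf: "infinite (UNIV :: 'a set)" and n2: "CARD('n) \<ge> 2"
    and cx: "two_complex Es"
    and S: "S = - (\<Union>i\<in>{1..CARD('n)}. Es i)"
    and \<phi>: "\<forall>x\<in>S. \<phi> x \<noteq> 0 \<and> dotp (\<phi> x) x = 0"
    and tournament: "\<forall>x\<in>S. \<forall>y\<in>S. (\<forall>c. y \<noteq> c *s x) \<longrightarrow> dotp (\<phi> x) y = 0 \<or> dotp (\<phi> y) x = 0"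
  shows False
proof (rule noncollinear_tournament_infinite[OF inf _ _ S])
  show "\<forall>U\<in>Es ` {1..CARD('n)}. vec.subspace U \<and> U \<noteq> UNIV"
    using cx n2 two_complex_neq_UNIV unfolding two_complex_def by blast
  show "\<forall>x\<in>S. vec.subspace {z. dotp (\<phi> x) z = 0} \<and> {z. dotp (\<phi> x) z = 0} \<noteq> UNIV
      \<and> x \<in> {z. dotp (\<phi> x) z = 0}"
    using \<phi> kernel_neq_UNIV subspace_kernel by blast
  show "\<forall>x\<in>S. \<forall>y\<in>S. (\<forall>c. y \<noteq> c *s x) \<longrightarrow>
      y \<in> {z. dotp (\<phi> x) z = 0} \<or> x \<in> {z. dotp (\<phi> y) z = 0}"
    using tournament by simp
qed simp

section \<open>Finite fields\<close>

lemma card_subspace_le: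
  fixes U :: "('a::field^'n) set"
  assumes fin: "finite (UNIV :: 'a set)" and U: "vec.subspace U"
  shows "card U \<le> CARD('a) ^ vec.dim U"
proof -
  obtain B where B: "B \<subseteq> U" "vec.independent B" "U \<subseteq> vec.span B" "card B = vec.dim U"
    using vec.basis_exists[of U] by blast
  have "finite B"
    using B(2) vec.finiteI_independent by blast
  define comb where "comb u = (\<Sum>v\<in>B. u v *s v)" for u
  have "U \<subseteq> comb ` (PiE B (\<lambda>_. UNIV))"
  proof
    fix z assume "z \<in> U"
    then obtain u where "z = comb u"
      using B(3) vec.span_finite[OF \<open>finite B\<close>] by (auto simp: comb_def)
    moreover have "comb u = comb (restrict u B)"
      unfolding comb_def by (rule sum.cong) auto
    ultimately show "z \<in> comb ` (PiE B (\<lambda>_. UNIV))"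
      by auto
  qed
  then have "card U \<le> card (PiE B (\<lambda>_. UNIV :: 'a set))"
    using fin \<open>finite B\<close> by (meson card_image_le card_mono finite_PiE finite_imageI order_trans)
  also have "\<dots> = CARD('a) ^ vec.dim U"
    using card_PiE[OF \<open>finite B\<close>, of "\<lambda>_. UNIV :: 'a set"] B(4) by simp
  finally show ?thesis .
qed

lemma card_kernel_le:
  fixes f :: "'a::field^'n"
  assumes fin: "finite (UNIV :: 'a set)" and "f \<noteq> 0"
  shows "card {z. dotp f z = 0} \<le> CARD('a) ^ (CARD('n) - 1)"
proof -
  have "vec.dim {z. dotp f z = 0} \<noteq> CARD('n)"
    using kernel_neq_UNIV[OF \<open>f \<noteq> 0\<close>] subspace_kernel[of f]
    by (metis span_eq_UNIV_iff_dim vec.span_eq_iff)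
  then have "vec.dim {z. dotp f z = 0} \<le> CARD('n) - 1"
    using dim_subset_UNIV_cart_gen[of "{z. dotp f z = 0}"] by linarith
  moreover have "CARD('a) \<ge> 1"
    using fin by (simp add: Suc_leI finite_UNIV_card_ge_0)
  ultimately have "CARD('a) ^ vec.dim {z. dotp f z = 0} \<le> CARD('a) ^ (CARD('n) - 1)"
    by (rule power_increasing)
  then show ?thesis
    using card_subspace_le[OF fin subspace_kernel, of f] by linarith
qed

lemma card_square_le_tournament:
  fixes S :: "'a set" and L A :: "'a \<Rightarrow> 'a set"
  assumes S: "finite S"
    and LA: "\<forall>x\<in>S. L x \<subseteq> A x \<and> A x \<subseteq> S \<and> card (L x) = m"
    and L_sym: "\<And>x y. y \<in> L x \<Longrightarrow> x \<in> L y"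
    and arcs: "\<forall>x\<in>S. \<forall>y\<in>S. y \<notin> L x \<longrightarrow> y \<in> A x \<or> x \<in> A y"
  shows "card S * card S \<le> (\<Sum>x\<in>S. m + 2 * (card (A x) - m))"
proof -
  have fin: "finite (A x)" "finite (L x)" if "x \<in> S" for x
    using LA that S finite_subset by metis+
  define P where "P = Sigma S (\<lambda>x. A x - L x)"
  have "finite P"
    unfolding P_def using S fin by blast
  have "S \<times> S \<subseteq> Sigma S L \<union> P \<union> prod.swap ` P"
  proof
    fix p assume "p \<in> S \<times> S"
    then obtain x y where p: "p = (x, y)" "x \<in> S" "y \<in> S"
      by blast
    consider "y \<in> L x" | "(x, y) \<in> P" | "(y, x) \<in> P"
      using arcs L_sym p unfolding P_def by blast
    then show "p \<in> Sigma S L \<union> P \<union> prod.swap ` P"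
      by cases (use p in \<open>auto intro: image_eqI[where x = "(y, x)"]\<close>)
  qed
  then have "card (S \<times> S) \<le> card (Sigma S L \<union> P \<union> prod.swap ` P)"
    using S fin \<open>finite P\<close> by (intro card_mono) auto
  also have "\<dots> \<le> card (Sigma S L) + card P + card (prod.swap ` P)"
    by (meson add_right_mono card_Un_le order_trans)
  also have "\<dots> \<le> card (Sigma S L) + 2 * card P"
    using card_image_le[OF \<open>finite P\<close>, of prod.swap] by simp
  also have "\<dots> = (\<Sum>x\<in>S. m + 2 * (card (A x) - m))"
    using S fin LA
    by (simp add: P_def card_SigmaI card_Diff_subset sum.distrib sum_distrib_left)
  finally show ?thesis
    by (simp add: card_cartesian_product)
qed

lemma card_nonzero_multiples:
  fixes x :: "'a::field^'n"
  assumes "finite (UNIV :: 'a set)" and "x \<noteq> 0"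
  shows "card ((\<lambda>c. c *s x) ` (UNIV - {0})) = CARD('a) - 1"
proof -
  have "inj_on (\<lambda>c. c *s x) (UNIV - {0})"
    using assms(2) by (intro inj_onI) (auto simp: vec.scale_cancel_right)
  then show ?thesis
    using assms(1) by (simp add: card_image card_Diff_singleton)
qed

lemma noncollinear_tournament_count:
  fixes S :: "('a::field^'n) set" and H :: "'a^'n \<Rightarrow> ('a^'n) set"
  assumes fin: "finite (UNIV :: 'a set)"
    and S: "S \<noteq> {}" "0 \<notin> S" "\<forall>x\<in>S. \<forall>c. c \<noteq> 0 \<longrightarrow> c *s x \<in> S"
    and H: "\<forall>x\<in>S. vec.subspace (H x) \<and> x \<in> H x"
    and tournament: "\<forall>x\<in>S. \<forall>y\<in>S. (\<forall>c. y \<noteq> c *s x) \<longrightarrow> y \<in> H x \<or> x \<in> H y"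
  shows "\<exists>x\<in>S. card S + (CARD('a) - 1) \<le> 2 * card (S \<inter> H x)"
proof (rule ccontr)
  assume "\<not> ?thesis"
  then have small: "2 * card (S \<inter> H x) < card S + (CARD('a) - 1)" if "x \<in> S" for x
    using that not_le by blast
  define L where "L x = (\<lambda>c. c *s x) ` (UNIV - {0})" for x :: "'a^'n"
  have "finite S"
    by (rule finite_subset[OF subset_UNIV finite_UNIV_vec[OF fin]])
  have L_sub: "L x \<subseteq> S \<inter> H x" if "x \<in> S" for x
  proof -
    have "vec.subspace (H x)" "x \<in> H x"
      using H that by auto
    then show ?thesis
      using that S(3) by (auto simp: L_def vec.subspace_scale)
  qed
  have card_L: "card (L x) = CARD('a) - 1" if "x \<in> S" for x
    unfolding L_def using fin that S(2) by (intro card_nonzero_multiples) auto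
  have "x \<in> L y" if "y \<in> L x" for x y
  proof -
    obtain c where "c \<noteq> 0" "y = c *s x"
      using \<open>y \<in> L x\<close> unfolding L_def by blast
    then show ?thesis
      unfolding L_def by (intro image_eqI[of _ _ "inverse c"]) (auto simp: vector_smult_assoc)
  qed
  moreover have "y \<in> S \<inter> H x \<or> x \<in> S \<inter> H y" if "x \<in> S" "y \<in> S" "y \<notin> L x" for x y
  proof -
    have "y \<noteq> c *s x" for c
      using that S(2) by (cases "c = 0") (auto simp: L_def)
    then show ?thesis
      using tournament that by blast
  qed
  ultimately have "card S * card S
      \<le> (\<Sum>x\<in>S. (CARD('a) - 1) + 2 * (card (S \<inter> H x) - (CARD('a) - 1)))"
    using L_sub card_L \<open>finite S\<close>
    by (intro card_square_le_tournament[where L = L and A = "\<lambda>x. S \<inter> H x"]) auto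
  also have "\<dots> < (\<Sum>x\<in>S. card S)"
  proof (rule sum_strict_mono)
    fix x assume "x \<in> S"
    with small[of x] card_L[of x] card_mono[OF _ L_sub[of x]] \<open>finite S\<close>
    show "(CARD('a) - 1) + 2 * (card (S \<inter> H x) - (CARD('a) - 1)) < card S"
      by fastforce
  qed (use \<open>finite S\<close> S(1) in auto)
  finally show False
    by simp
qed

lemma card_UNIV_ge_3:
  assumes "finite (UNIV :: 'a::field set)" and "(2::'a) \<noteq> 0"
  shows "CARD('a) \<ge> 3"
proof -
  have "(1::'a) \<noteq> 2"
  proof
    assume "(1::'a) = 2"
    then have "(2::'a) - 1 = 0"
      by simp
    then show False
      by simp
  qed
  then have "card {0::'a, 1, 2} = 3"
    using assms(2) by simp
  moreover have "card {0::'a, 1, 2} \<le> CARD('a)"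
    using assms(1) by (intro card_mono) auto
  ultimately show ?thesis
    by simp
qed

lemma card_UN_common_element_le:
  assumes I: "finite I" and E: "\<forall>i\<in>I. finite (E i) \<and> a \<in> E i"
  shows "card (\<Union>i\<in>I. E i) + card I \<le> 1 + (\<Sum>i\<in>I. card (E i))"
proof -
  have "card (\<Union>i\<in>I. E i) \<le> 1 + card ((\<Union>i\<in>I. E i) - {a})"
    by (simp add: card_Diff_singleton_if) linarith
  also have "(\<Union>i\<in>I. E i) - {a} = (\<Union>i\<in>I. E i - {a})"
    by blast
  also have "card \<dots> \<le> (\<Sum>i\<in>I. card (E i - {a}))"
    using card_UN_le[OF I] .
  finally have "card (\<Union>i\<in>I. E i) \<le> 1 + (\<Sum>i\<in>I. card (E i - {a}))"
    by simp
  moreover have "(\<Sum>i\<in>I. card (E i - {a})) + card I = (\<Sum>i\<in>I. card (E i))"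
  proof -
    have "card (E i - {a}) + 1 = card (E i)" if "i \<in> I" for i
    proof -
      have "card (E i) > 0"
        using E that card_gt_0_iff by blast
      with that show ?thesis
        using E by (simp add: card_Diff_singleton)
    qed
    then have "(\<Sum>i\<in>I. card (E i - {a}) + 1) = (\<Sum>i\<in>I. card (E i))"
      by (rule sum.cong[OF refl])
    then show ?thesis
      by (simp add: sum_Suc)
  qed
  ultimately show ?thesis
    by linarith
qed

lemma plane_meets_kernel:
  fixes E :: "('a::field^'n) set"
  assumes E: "vec.subspace E" "vec.dim E = 2"
  obtains v where "v \<noteq> 0" "v \<in> E" "dotp f v = 0"
proof -
  obtain B where B: "B \<subseteq> E" "vec.independent B" "E \<subseteq> vec.span B" "card B = vec.dim E"
    using vec.basis_exists[of E] by blast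
  then obtain b1 b2 where b: "B = {b1, b2}" "b1 \<noteq> b2"
    using E(2) by (auto simp: card_2_iff)
  have "b1 \<noteq> 0"
    using B(2) b vec.dependent_zero by blast
  have "vec.independent (insert b2 {b1})"
    using B(2) b by (simp add: insert_commute)
  then have "b2 \<notin> vec.span {b1}"
    using b(2) by (simp add: vec.independent_insert)
  then have b12: "\<forall>c. b2 \<noteq> c *s b1"
    by (auto simp: vec.span_singleton)
  show ?thesis
  proof (cases "dotp f b1 = 0")
    case True
    then show ?thesis
      using that \<open>b1 \<noteq> 0\<close> B(1) b by blast
  next
    case False
    let ?v = "dotp f b2 *s b1 + (- dotp f b1) *s b2"
    have "?v \<noteq> 0"
      by (rule noncollinear_comb_nonzero[OF b12]) (use False in simp)
    moreover have "?v \<in> E"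
      using B(1) b E(1) by (intro vec.subspace_add vec.subspace_scale) auto
    moreover have "dotp f ?v = 0"
      by (simp add: dotp_diff dotp_scale mult.commute)
    ultimately show ?thesis
      using that by blast
  qed
qed

lemma card_kernel_inter_plane_ge_3:
  fixes E :: "('a::field^'n) set"
  assumes fin: "finite (UNIV :: 'a set)" and char: "(2::'a) \<noteq> 0"
    and E: "vec.subspace E" "vec.dim E = 2"
  shows "card ({z. dotp f z = 0} \<inter> E) \<ge> 3"
proof -
  obtain v where v: "v \<noteq> 0" "v \<in> E" "dotp f v = 0"
    using plane_meets_kernel[OF E] by blast
  have "2 *s v \<noteq> v"
  proof
    assume "2 *s v = v"
    moreover have "2 *s v = v + v"
      by (metis one_add_one vector_sadd_rdistrib vector_smult_lid)
    ultimately show False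
      using v(1) by simp
  qed
  then have three: "card {0, v, 2 *s v} = 3"
    using v(1) char by simp
  have "{0, v, 2 *s v} \<subseteq> {z. dotp f z = 0} \<inter> E"
    using v E(1) by (simp add: dotp_scale vec.subspace_0 vec.subspace_scale)
  moreover have "finite ({z. dotp f z = 0} \<inter> E)"
    by (rule finite_subset[OF subset_UNIV finite_UNIV_vec[OF fin]])
  ultimately show ?thesis
    using card_mono three by metis
qed

lemma card_two_complex_complement_ge:
  fixes Es :: "nat \<Rightarrow> ('a::field^'n) set"
  assumes fin: "finite (UNIV :: 'a set)" and cx: "two_complex Es"
  shows "int CARD('a) ^ CARD('n) + int CARD('n) - 1 - (\<Sum>i=1..CARD('n). int CARD('a) ^ ((i + 1) div 2))
           \<le> int (card (- (\<Union>i\<in>{1..CARD('n)}. Es i)))"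
proof -
  let ?U = "\<Union>i\<in>{1..CARD('n)}. Es i"
  have finA: "finite (A :: ('a^'n) set)" for A
    by (rule finite_subset[OF subset_UNIV finite_UNIV_vec[OF fin]])
  have Es: "vec.subspace (Es i)" "vec.dim (Es i) = (i + 1) div 2" if "i \<in> {1..CARD('n)}" for i
    using cx that unfolding two_complex_def by auto
  have compl: "card (- A) + card A = CARD('a) ^ CARD('n)" for A :: "('a^'n) set"
  proof -
    have "card (UNIV - A) = CARD('a^'n) - card A"
      by (rule card_Diff_subset[OF finA subset_UNIV])
    moreover have "card A \<le> CARD('a^'n)"
      by (rule card_mono[OF finA subset_UNIV])
    ultimately show ?thesis
      by (simp add: Compl_eq_Diff_UNIV)
  qed
  have "\<forall>i\<in>{1..CARD('n)}. finite (Es i) \<and> 0 \<in> Es i"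
    using Es finA vec.subspace_0 by blast
  then have "card ?U + CARD('n) \<le> 1 + (\<Sum>i=1..CARD('n). card (Es i))"
    using card_UN_common_element_le[of "{1..CARD('n)}" Es 0] by simp
  moreover have "(\<Sum>i=1..CARD('n). card (Es i)) \<le> (\<Sum>i=1..CARD('n). CARD('a) ^ ((i + 1) div 2))"
    using card_subspace_le[OF fin] Es by (intro sum_mono) fastforce
  ultimately have "CARD('a) ^ CARD('n) + CARD('n)
      \<le> card (- ?U) + 1 + (\<Sum>i=1..CARD('n). CARD('a) ^ ((i + 1) div 2))"
    using compl[of ?U] by linarith
  then have "int (CARD('a) ^ CARD('n) + CARD('n))
      \<le> int (card (- ?U) + 1 + (\<Sum>i=1..CARD('n). CARD('a) ^ ((i + 1) div 2)))"
    by (simp only: of_nat_le_iff)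
  then show ?thesis
    by (simp add: of_nat_sum)
qed

lemma card_kernel_diff_two_complex_le:
  fixes Es :: "nat \<Rightarrow> ('a::field^'n) set"
  assumes fin: "finite (UNIV :: 'a set)" and char: "(2::'a) \<noteq> 0" and n2: "CARD('n) \<ge> 2"
    and cx: "two_complex Es" and "f \<noteq> 0"
  shows "card ({z. dotp f z = 0} - (\<Union>i\<in>{1..CARD('n)}. Es i)) + (if CARD('n) = 3 then 3 else 1)
           \<le> CARD('a) ^ (CARD('n) - 1)"
proof -
  let ?H = "{z. dotp f z = 0}" and ?U = "\<Union>i\<in>{1..CARD('n)}. Es i"
  have finA: "finite (A :: ('a^'n) set)" for A
    by (rule finite_subset[OF subset_UNIV finite_UNIV_vec[OF fin]])
  have Es: "vec.subspace (Es i)" "vec.dim (Es i) = (i + 1) div 2" if "i \<in> {1..CARD('n)}" for i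
    using cx that unfolding two_complex_def by auto
  have "(?H - ?U) \<inter> (?H \<inter> ?U) = {}"
    by blast
  then have "card (?H - ?U) + card (?H \<inter> ?U) = card ?H"
    using card_Un_disjoint[OF finA finA] by (metis Un_Diff_Int)
  moreover have "card ?H \<le> CARD('a) ^ (CARD('n) - 1)"
    using card_kernel_le[OF fin \<open>f \<noteq> 0\<close>] .
  \<comment> \<open>\<open>?H \<inter> ?U\<close> contains \<open>0\<close>, and for \<open>n = 3\<close> a whole line of the plane \<open>E 3\<close>.\<close>
  moreover have "(if CARD('n) = 3 then 3 else 1) \<le> card (?H \<inter> ?U)"
  proof (cases "CARD('n) = 3")
    case True
    then have "3 \<in> {1..CARD('n)}"
      by simp
    then have "3 \<le> card (?H \<inter> Es 3)"
      using card_kernel_inter_plane_ge_3[OF fin char, of "Es 3"] Es by simp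
    also have "\<dots> \<le> card (?H \<inter> ?U)"
      using \<open>3 \<in> {1..CARD('n)}\<close> by (intro card_mono[OF finA]) blast
    finally show ?thesis
      by (simp add: True)
  next
    case False
    have "1 \<in> {1..CARD('n)}"
      using n2 by simp
    then have "0 \<in> ?H \<inter> ?U"
      using Es(1) vec.subspace_0 by fastforce
    then have "card (?H \<inter> ?U) > 0"
      using finA card_gt_0_iff by blast
    then show ?thesis
      by (simp add: False)
  qed
  ultimately show ?thesis
    by linarith
qed

lemma sum_two_complex_dims_le:
  fixes q :: int
  assumes q: "q \<ge> 3" and n: "n \<ge> 4"
  shows "(\<Sum>i=1..n. q ^ ((i + 1) div 2)) \<le> q ^ (n - 1)"
  using n
proof (induction n rule: nat_induct_at_least)
  case base
  have "{1..4::nat} = {1, 2, 3, 4}"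
    by auto
  then have "(\<Sum>i=1..4::nat. q ^ ((i + 1) div 2)) = 2 * q + 2 * q ^ 2"
    by simp
  also have "\<dots> \<le> q ^ 3"
  proof -
    have "2 * q + 2 * q ^ 2 \<le> 3 * q ^ 2"
      using q by (simp add: power2_eq_square)
    also have "\<dots> \<le> q * q ^ 2"
      using q by (intro mult_right_mono) auto
    finally show ?thesis
      by (simp add: power3_eq_cube power2_eq_square mult_ac)
  qed
  finally show ?case
    by simp
next
  case (Suc n)
  have "(n + 2) div 2 \<le> n - 1"
    using Suc.hyps by linarith
  then have "q ^ ((n + 2) div 2) \<le> q ^ (n - 1)"
    using q by (intro power_increasing) auto
  then have "(\<Sum>i=1..Suc n. q ^ ((i + 1) div 2)) \<le> 2 * q ^ (n - 1)"
    using Suc.IH by simp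
  also have "\<dots> \<le> q * q ^ (n - 1)"
    using q by (intro mult_right_mono) auto
  also have "\<dots> = q ^ (Suc n - 1)"
    using Suc.hyps by (cases n) auto
  finally show ?case .
qed

lemma two_complex_count_gap:
  fixes q :: int
  assumes q: "q \<ge> 3" and n: "n \<ge> 2"
  defines "R \<equiv> 2 * (q ^ (n - 1) - (if n = 3 then 3 else 1)) - (q - 1)"
  shows "0 \<le> R" and "R < q ^ n + int n - 1 - (\<Sum>i=1..n. q ^ ((i + 1) div 2))"
proof -
  consider "n = 2" | "n = 3" | "n \<ge> 4"
    using n by linarith
  then have "0 \<le> R \<and> R < q ^ n + int n - 1 - (\<Sum>i=1..n. q ^ ((i + 1) div 2))"
  proof cases
    case 1
    have "0 < (q - 1) * (q - 2)"
      using q by (intro mult_pos_pos) auto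
    moreover have "{1..n} = {1, 2}"
      using 1 by auto
    ultimately show ?thesis
      using q by (simp add: R_def 1 power2_eq_square algebra_simps)
  next
    case 2
    have qq: "3 * q \<le> q * q"
      using q by (intro mult_right_mono) auto
    have "0 \<le> R"
      by (simp add: R_def 2 power2_eq_square) (use q qq in linarith)
    moreover have "0 \<le> (q - 3) * (q * q - 1)"
      using q qq by (intro mult_nonneg_nonneg) auto
    moreover have "{1..n} = {1, 2, 3}"
      using 2 by auto
    ultimately show ?thesis
      by (simp add: R_def 2 power3_eq_cube power2_eq_square algebra_simps)
  next
    case 3
    define Q where "Q = q ^ (n - 1)"
    have "R = 2 * Q - q - 1"
      using 3 by (simp add: R_def Q_def)
    moreover have "q ^ n = q * Q"
      using 3 by (simp add: Q_def power_eq_if)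
    moreover have "q \<le> Q"
      using q 3 power_increasing[of 1 "n - 1" q] by (simp add: Q_def)
    moreover have "3 * Q \<le> q * Q"
      using q \<open>q \<le> Q\<close> by (intro mult_right_mono) auto
    moreover have "(\<Sum>i=1..n. q ^ ((i + 1) div 2)) \<le> Q"
      unfolding Q_def by (rule sum_two_complex_dims_le[OF q 3])
    ultimately show ?thesis
      using q by linarith
  qed
  then show "0 \<le> R" and "R < q ^ n + int n - 1 - (\<Sum>i=1..n. q ^ ((i + 1) div 2))"
    by auto
qed

lemma two_complex_tournament_finite:
  fixes Es :: "nat \<Rightarrow> ('a::field^'n) set" and \<phi> :: "'a^'n \<Rightarrow> 'a^'n"
  assumes fin: "finite (UNIV :: 'a set)" and char: "(2::'a) \<noteq> 0" and n2: "CARD('n) \<ge> 2"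
    and cx: "two_complex Es"
    and S: "S = - (\<Union>i\<in>{1..CARD('n)}. Es i)"
    and \<phi>: "\<forall>x\<in>S. \<phi> x \<noteq> 0 \<and> dotp (\<phi> x) x = 0"
    and tournament: "\<forall>x\<in>S. \<forall>y\<in>S. (\<forall>c. y \<noteq> c *s x) \<longrightarrow> dotp (\<phi> x) y = 0 \<or> dotp (\<phi> y) x = 0"
  shows False
proof -
  define q where "q = CARD('a)"
  define n where "n = CARD('n)"
  define R where "R = 2 * (int q ^ (n - 1) - (if n = 3 then 3 else 1)) - (int q - 1)"
  have "q \<ge> 3"
    unfolding q_def using fin char by (rule card_UNIV_ge_3)
  then have S_big: "R < int (card S)" and "0 \<le> R"
    using two_complex_count_gap[of "int q" n] card_two_complex_complement_ge[OF fin cx] n2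
    by (simp_all add: R_def S q_def n_def)
  have Es: "vec.subspace (Es i)" if "i \<in> {1..n}" for i
    using cx that unfolding two_complex_def n_def by auto
  have "S \<noteq> {}"
    using S_big \<open>0 \<le> R\<close> by auto
  moreover have "0 \<notin> S"
    using S Es vec.subspace_0 n2 by (fastforce simp: n_def)
  moreover have "\<forall>x\<in>S. \<forall>c. c \<noteq> 0 \<longrightarrow> c *s x \<in> S"
  proof (intro ballI allI impI)
    fix x c assume "x \<in> S" "(c::'a) \<noteq> 0"
    then have "c *s x \<notin> Es i" if "i \<in> {1..n}" for i
      using scale_notin_subspace[OF Es[OF that]] that by (auto simp: S n_def)
    then show "c *s x \<in> S"
      by (auto simp: S n_def)
  qed
  moreover have "\<forall>x\<in>S. vec.subspace {z. dotp (\<phi> x) z = 0} \<and> x \<in> {z. dotp (\<phi> x) z = 0}"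
    using \<phi> by (simp add: subspace_kernel)
  ultimately obtain x where x: "x \<in> S" "card S + (q - 1) \<le> 2 * card (S \<inter> {z. dotp (\<phi> x) z = 0})"
    using noncollinear_tournament_count[OF fin, of S "\<lambda>x. {z. dotp (\<phi> x) z = 0}"] tournament
    unfolding q_def by auto
  moreover have "card (S \<inter> {z. dotp (\<phi> x) z = 0}) + (if n = 3 then 3 else 1) \<le> q ^ (n - 1)"
    using card_kernel_diff_two_complex_le[OF fin char n2 cx, of "\<phi> x"] \<phi> x(1)
    by (simp add: S q_def n_def Diff_eq Int_commute)
  ultimately have "int (card S) + (int q - 1) + 2 * (if n = 3 then 3 else 1) \<le> 2 * int q ^ (n - 1)"
    using \<open>q \<ge> 3\<close> by (simp add: of_nat_diff flip: of_nat_power of_nat_le_iff split: if_splits)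
  with S_big show False
    by (simp add: R_def)
qed

theorem mainTheorem9:
  fixes V :: "('a::field^'n^'n) set"
    and Es :: "nat \<Rightarrow> ('a^'n) set"
  assumes char: "(2::'a) \<noteq> 0"
    and n2: "CARD('n) \<ge> 2"
    and V: "linear_subspace_mat V"
    and two_eig: "\<forall>u\<in>V. finite {c. is_eigenvalue u c} \<and> card {c. is_eigenvalue u c} \<le> 2"
    and n_eq_2: "CARD('n) = 2 \<Longrightarrow>
       (\<forall>u\<in>V. finite {c. c \<noteq> 0 \<and> is_eigenvalue u c} \<and> card {c. c \<noteq> 0 \<and> is_eigenvalue u c} \<le> 1)"
    and cx: "two_complex Es"
  shows "\<exists>x. V_good V x \<and> x \<notin> (\<Union>i\<in>{1..CARD('n)}. Es i)"
proof (rule ccontr)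
  assume no_good: "\<not> ?thesis"
  define S where "S = - (\<Union>i\<in>{1..CARD('n)}. Es i)"
  have "1 \<in> {1..CARD('n)}"
    using n2 by simp
  then have "0 \<notin> S"
    using cx vec.subspace_0 unfolding S_def two_complex_def by blast
  then have "\<forall>x\<in>S. x \<noteq> 0 \<and> \<not> V_good V x"
    using no_good unfolding S_def by blast
  then obtain \<phi> where \<phi>: "\<forall>x\<in>S. \<phi> x \<noteq> 0 \<and> dotp (\<phi> x) x = 0"
    and tournament: "\<forall>x\<in>S. \<forall>y\<in>S. (\<forall>c. y \<noteq> c *s x) \<longrightarrow> dotp (\<phi> x) y = 0 \<or> dotp (\<phi> y) x = 0"
    using bad_vectors_kernel_tournament[OF char n2 V two_eig n_eq_2] by blast
  show False
  proof (cases "finite (UNIV :: 'a set)")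
    case True
    show False
      using True char n2 cx S_def \<phi> tournament by (rule two_complex_tournament_finite)
  next
    case False
    show False
      using False n2 cx S_def \<phi> tournament by (rule two_complex_tournament_infinite)
  qed
qed

end
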